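(* Let $n\mid(q+1)$, let $r\ge1$ and $\delta\ge3$ be integers with $\delta$ odd and $(r+\delta-1)\mid n$, and put $\nu=n/(r+\delta-1)$, $B=\{\alpha^{j}:-\tfrac{\delta-3}{2}\le j\le\tfrac{\delta-1}{2}\}$. Let $i\in\{0,1,\dots,\lfloor\frac{r-1}{2}\rfloor\}$. (1) If $r+\delta-1$ is odd, for $\ell\in\{0,1,\dots,\lfloor\frac{\nu-3}{2}\rfloor\}$ let $A=\{\alpha^{j}: -\frac{r+\delta}{2}-\ell(r+\delta-1)-i\le j\le \frac{r+\delta-2}{2}+\ell(r+\delta-1)+i\}\cup\{\alpha^{\frac{r+\delta-2}{2}+(\ell+e)(r+\delta-1)}: e=1,\dots,\nu-2\ell-2\}$. Then $C_{AB}$ is an optimal cyclic $(r,\delta)$-LRC over $\mathbb{F}_q$ with dimension $(\nu-2\ell-1)r-2i$ and minimum distance $\delta+2i+(2\ell+1)(r+\delta-1)$. (2) If $r+\delta-1$ and $\nu$ are both odd, for $\ell\in\{1,2,\dots,\frac{\nu-3}{2}\}$ let $A=\{\alpha^{j}: \frac{n-1}{2}-\ell(r+\delta-1)-i\le j\le \frac{n-1}{2}+\ell(r+\delta-1)+i\}\cup\{\alpha^{\frac{n-1}{2}+(\ell+e)(r+\delta-1)}: e=1,\dots,\nu-2\ell-1\}$. Then $C_{AB}$ is an optimal cyclic $(r,\delta)$-LRC over $\mathbb{F}_q$ with dimension $(\nu-2\ell)r-2i$ and minimum distance $\delta+2i+2\ell(r+\delta-1)$.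
   Context: Let $q$ be a prime power and $n\mid(q+1)$, so the set $R_n$ of all $n$-th roots of unity lies in $\mathbb{F}_{q^2}$; let $\alpha\in\mathbb{F}_{q^2}$ be a primitive $n$-th root of unity; exponents of $\alpha$ are read modulo $n$. For $A,B\subseteq R_n$, $AB=\{\beta\gamma:\beta\in A,\gamma\in B\}$. For $Z\subseteq R_n$ such that $\{j:\alpha^j\in Z\}$ is closed under $j\mapsto -j\bmod n$ (equivalently a union of $q$-cyclotomic cosets modulo $n$), $C_Z$ denotes the cyclic code of length $n$ over $\mathbb{F}_q$ generated by $\prod_{\beta\in Z}(x-\beta)\in\mathbb{F}_q[x]$ in $\mathbb{F}_q[x]/(x^n-1)$ (dimension $n-|Z|$). Locality: for a linear code $C\subseteq\mathbb{F}_q^n$ and integers $r\ge1$, $\delta\ge2$, the $i$-th coordinate has $(r,\delta)$-locality if there is $S_i\subseteq\{1,\dots,n\}$ with $i\in S_i$, $|S_i|\le r+\delta-1$ such that the punctured code $C|_{S_i}$ has minimum distance at least $\delta$; $C$ is an $(r,\delta)$-LRC if every coordinate has $(r,\delta)$-locality. An $[n,k,d]$ $(r,\delta)$-LRC is optimal if $d=n-k-(\lceil k/r\rceil-1)(\delta-1)+1$ (always an upper bound on $d$). *)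

theory Defs
  imports "HOL-Computational_Algebra.Polynomial"
begin

definition rpow :: "'a::field \<Rightarrow> nat \<Rightarrow> int \<Rightarrow> 'a" where
  "rpow \<alpha> n j = \<alpha> ^ nat (j mod int n)"

definition setmul :: "'a::field set \<Rightarrow> 'a set \<Rightarrow> 'a set" where
  "setmul A B = {b * c | b c. b \<in> A \<and> c \<in> B}"

text \<open>The subfield F_q of a field of size q^2.\<close>
definition Fsub :: "nat \<Rightarrow> 'a::field set" where
  "Fsub q = {x. x ^ q = x}"

definition gen_poly :: "'a::field set \<Rightarrow> 'a poly" where
  "gen_poly Z = (\<Prod>\<beta>\<in>Z. [:-\<beta>, 1:])"

text \<open>Words of length n over F_q are functions nat => 'a, zero outside {..<n}.
  C_Z = residues in F_q[x]/(x^n-1) of multiples of the generator polynomial;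
  since the generator divides x^n-1, these are the words whose polynomial
  of degree < n is divisible by the generator.\<close>
definition cyc_code :: "nat \<Rightarrow> nat \<Rightarrow> 'a::field set \<Rightarrow> (nat \<Rightarrow> 'a) set" where
  "cyc_code q n Z = {c. (\<forall>i<n. c i \<in> Fsub q) \<and> (\<forall>i\<ge>n. c i = 0) \<and>
       gen_poly Z dvd (\<Sum>i<n. monom (c i) i)}"

definition hdist :: "nat set \<Rightarrow> (nat \<Rightarrow> 'a) \<Rightarrow> (nat \<Rightarrow> 'a) \<Rightarrow> nat" where
  "hdist S c c' = card {i\<in>S. c i \<noteq> c' i}"

definition min_dist :: "nat \<Rightarrow> (nat \<Rightarrow> 'a) set \<Rightarrow> nat" where
  "min_dist n C = Min {hdist {..<n} c c' | c c'. c \<in> C \<and> c' \<in> C \<and> c \<noteq> c'}"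

text \<open>Coordinate i has (r,delta)-locality: the punctured code C|_S has
  minimum distance at least delta (any two codewords differing on S differ
  in at least delta positions of S).\<close>
definition has_locality :: "nat \<Rightarrow> nat \<Rightarrow> nat \<Rightarrow> (nat \<Rightarrow> 'a) set \<Rightarrow> nat \<Rightarrow> bool" where
  "has_locality n r \<delta> C i = (\<exists>S. i \<in> S \<and> S \<subseteq> {..<n} \<and> card S \<le> r + \<delta> - 1 \<and>
     (\<forall>c\<in>C. \<forall>c'\<in>C. (\<exists>j\<in>S. c j \<noteq> c' j) \<longrightarrow> hdist S c c' \<ge> \<delta>))"

definition is_LRC :: "nat \<Rightarrow> nat \<Rightarrow> nat \<Rightarrow> (nat \<Rightarrow> 'a) set \<Rightarrow> bool" where
  "is_LRC n r \<delta> C = (\<forall>i<n. has_locality n r \<delta> C i)"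

text \<open>C is an optimal [n,k,d] (r,delta)-LRC over F_q (dimension k over F_q,
  i.e. card C = q^k).\<close>
definition optimal_LRC_with :: "nat \<Rightarrow> nat \<Rightarrow> nat \<Rightarrow> nat \<Rightarrow> (nat \<Rightarrow> 'a) set \<Rightarrow> nat \<Rightarrow> nat \<Rightarrow> bool" where
  "optimal_LRC_with q n r \<delta> C k d = (is_LRC n r \<delta> C \<and> card C = q ^ k \<and> min_dist n C = d \<and>
     int d = int n - int k - (\<lceil>real k / real r\<rceil> - 1) * (int \<delta> - 1) + 1)"

end

(* The defining set AB consists of the powers alpha^t, t in a set E of exponents which is closed
   under negation modulo n. Since n divides q + 1, the Frobenius map sends alpha^t to alpha^-t, so
   the generator polynomial has coefficients in F_q and the code has dimension n - |E| over F_q.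
   E contains a run of d - 1 consecutive exponents, so the BCH bound gives minimum distance at
   least d. E also contains delta - 1 consecutive exponents shifted by every multiple of
   m = r + delta - 1; averaging over the nu-th roots of unity alpha^(hm) turns this into a BCH bound
   on each residue class of coordinates modulo nu, and these classes of size m are the repair
   groups. Conversely, a pigeonhole argument over the repair groups shows that d is at most the
   Singleton-like bound, so equality holds. *)

theory Submission
  imports
    Defs
    "HOL-Number_Theory.Residues"
begin

hide_const (open) UnivPoly.up_ring.coeff UnivPoly.up_ring.monom

section \<open>Fields of order \<open>q\<^sup>2\<close> and their subfield of order \<open>q\<close>\<close>

text \<open>Lagrange's theorem in the multiplicative group; the library's
  \<open>finite_field_power_card_eq_same\<close> needs the sort \<open>finite_field\<close>, which a type variable
  of sort \<open>{field, finite}\<close> is not known to have.\<close>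

lemma power_card_UNIV_minus_one:
  fixes x :: "'a::{field,finite}"
  assumes "x \<noteq> 0"
  shows "x ^ (card (UNIV :: 'a set) - 1) = 1"
proof -
  define R :: "'a ring" where
    "R = \<lparr>carrier = UNIV, monoid.mult = (*), one = 1, zero = 0, add = (+)\<rparr>"
  define G where "G = mult_of R"
  have "field R"
    unfolding R_def
    by unfold_locales
      (auto simp: algebra_simps Units_def intro: exI[of _ "- _"] exI[of _ "inverse _"] right_inverse)
  then interpret G: group G
    unfolding G_def by (rule field.field_mult_group)
  have pow: "x [^]\<^bsub>G\<^esub> k = x ^ k" for k
    by (induction k) (simp_all add: G_def R_def)
  have pow_order: "x [^]\<^bsub>G\<^esub> order G = x ^ 0"
    using G.pow_order_eq_1[of x] assms by (simp add: pow G_def R_def)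
  have "carrier G = UNIV - {0}"
    by (simp add: G_def R_def)
  then have order_G: "order G = card (UNIV :: 'a set) - 1"
    unfolding order_def by (simp add: card_Diff_singleton)
  show ?thesis
    using pow_order unfolding pow order_G power_0 .
qed

lemma power_card_UNIV_eq_self:
  fixes x :: "'a::{field,finite}"
  shows "x ^ card (UNIV :: 'a set) = x"
proof -
  obtain c where c: "card (UNIV :: 'a set) = Suc c"
    using finite_UNIV_card_ge_0[where ?'a = 'a] gr0_implies_Suc by auto
  show ?thesis
    using power_card_UNIV_minus_one[of x] unfolding c by (cases "x = 0") auto
qed

locale field_of_order_q_squared =
  fixes q :: nat and ty :: "'a::{field,finite} itself"
  assumes q_prime_power: "\<exists>p m. prime p \<and> m > 0 \<and> q = p ^ m"
    and card_UNIV: "card (UNIV :: 'a set) = q ^ 2"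
begin

lemma prime_CHAR: "prime CHAR('a)"
  using prime_CHAR_semidom[where ?'a = 'a] finite_imp_CHAR_pos[OF finite_UNIV] by blast

lemma q_eq_CHAR_power: "\<exists>m>0. q = CHAR('a) ^ m"
proof -
  obtain p m where p: "prime p" "m > 0" "q = p ^ m"
    using q_prime_power by blast
  have "CHAR('a) dvd p ^ (m * 2)"
    using CHAR_dvd_CARD[where ?'a = 'a] card_UNIV p by (simp add: power_mult)
  then have "CHAR('a) dvd p"
    using prime_CHAR prime_dvd_power by metis
  then have "CHAR('a) = p"
    using prime_CHAR p(1) by (simp add: primes_dvd_imp_eq)
  then show ?thesis
    using p by auto
qed

lemma q_ge_2: "q \<ge> 2"
proof -
  obtain p m where p: "prime p" "m > 0" "q = p ^ m"
    using q_prime_power by blast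
  have "p ^ 1 \<le> p ^ m"
    using p prime_gt_0_nat by (intro power_increasing) (auto simp: Suc_le_eq)
  then show ?thesis
    using p prime_ge_2_nat[of p] by simp
qed

lemma frobenius_add: "(x + y :: 'a) ^ q = x ^ q + y ^ q"
  using q_eq_CHAR_power prime_CHAR freshmans_dream' by blast

lemma frobenius_sum: "(sum f A :: 'a) ^ q = (\<Sum>i\<in>A. f i ^ q)"
  using q_eq_CHAR_power prime_CHAR freshmans_dream_sum' by blast

lemma frobenius_minus: "(- x :: 'a) ^ q = - (x ^ q)"
proof -
  have "0 = (x + - x) ^ q"
    using q_ge_2 by simp
  then show ?thesis
    unfolding frobenius_add by (simp add: eq_neg_iff_add_eq_0 add.commute)
qed

lemma frobenius_diff: "(x - y :: 'a) ^ q = x ^ q - y ^ q"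
  using frobenius_add[of x "- y"] frobenius_minus[of y] by simp

lemma frobenius_frobenius: "((x :: 'a) ^ q) ^ q = x"
  using power_card_UNIV_eq_self[of x] card_UNIV by (simp flip: power_mult add: power2_eq_square)

lemma inj_frobenius: "inj (\<lambda>x :: 'a. x ^ q)"
  by (metis frobenius_frobenius injI)

lemma Fsub_zero: "(0 :: 'a) \<in> Fsub q"
  using q_ge_2 by (simp add: Fsub_def)

lemma Fsub_add: "x \<in> Fsub q \<Longrightarrow> y \<in> Fsub q \<Longrightarrow> (x + y :: 'a) \<in> Fsub q"
  by (simp add: Fsub_def frobenius_add)

lemma Fsub_mult: "x \<in> Fsub q \<Longrightarrow> y \<in> Fsub q \<Longrightarrow> (x * y :: 'a) \<in> Fsub q"
  by (simp add: Fsub_def power_mult_distrib)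

lemma Fsub_sum: "(\<And>i. i \<in> A \<Longrightarrow> f i \<in> Fsub q) \<Longrightarrow> (sum f A :: 'a) \<in> Fsub q"
  by (induction A rule: infinite_finite_induct) (auto simp: Fsub_zero Fsub_add)

lemma card_roots_power_plus_linear_le: "card {x :: 'a. x ^ q + c * x = 0} \<le> q"
proof -
  define p where "p = monom (1 :: 'a) q + [:0, c:]"
  have "degree [:0, c:] < q"
    using q_ge_2 by simp
  then have deg: "degree p = q"
    unfolding p_def by (simp add: degree_add_eq_left degree_monom_eq)
  then have "p \<noteq> 0"
    using q_ge_2 by auto
  moreover have "{x. x ^ q + c * x = 0} = {x. poly p x = 0}"
    by (auto simp: p_def poly_monom mult.commute)
  ultimately show ?thesis
    using card_poly_roots_bound[of p] deg by simp
qed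

text \<open>The additive map \<open>x \<mapsto> x\<^sup>q - x\<close> has kernel \<open>Fsub q\<close> and image inside the roots of
  \<open>x\<^sup>q + x\<close>; both have at most \<open>q\<close> elements, and the product of their sizes is \<open>q\<^sup>2\<close>.\<close>

lemma card_Fsub: "card (Fsub q :: 'a set) = q"
proof -
  define \<phi> where "\<phi> x = x ^ q - x" for x :: 'a
  have kernel_le: "card (Fsub q :: 'a set) \<le> q"
    using card_roots_power_plus_linear_le[of "- 1"]
    by (simp add: Fsub_def)
  have image: "\<phi> ` UNIV \<subseteq> {y. y ^ q + 1 * y = 0}"
    by (auto simp: \<phi>_def frobenius_diff frobenius_frobenius)
  have image_le: "card (\<phi> ` UNIV) \<le> q"
    using card_mono[OF _ image] card_roots_power_plus_linear_le[of 1] by simp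
  have fibre: "\<phi> -` {\<phi> x} = (\<lambda>z. x + z) ` Fsub q" for x
  proof (rule Set.set_eqI)
    fix y
    have "y \<in> \<phi> -` {\<phi> x} \<longleftrightarrow> (y - x) ^ q = y - x"
      by (auto simp: \<phi>_def frobenius_diff algebra_simps)
    also have "\<dots> \<longleftrightarrow> y \<in> (\<lambda>z. x + z) ` Fsub q"
      by (auto simp: Fsub_def image_iff intro: exI[of _ "y - x"])
    finally show "y \<in> \<phi> -` {\<phi> x} \<longleftrightarrow> y \<in> (\<lambda>z. x + z) ` Fsub q" .
  qed
  have card_fibre: "card (\<phi> -` {y}) = card (Fsub q :: 'a set)" if y: "y \<in> \<phi> ` UNIV" for y
  proof -
    obtain x where "y = \<phi> x"
      using y by blast
    then show ?thesis
      using fibre[of x] by (simp add: card_image inj_on_def)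
  qed
  have "(UNIV :: 'a set) = (\<Union>y\<in>\<phi> ` UNIV. \<phi> -` {y})"
    by auto
  also have "card \<dots> = (\<Sum>y\<in>\<phi> ` UNIV. card (\<phi> -` {y}))"
    by (rule card_UN_disjoint) auto
  also have "\<dots> = card (\<phi> ` UNIV) * card (Fsub q :: 'a set)"
    using card_fibre by simp
  finally have "q * q = card (\<phi> ` UNIV) * card (Fsub q :: 'a set)"
    using card_UNIV by (simp add: power2_eq_square)
  also have "\<dots> \<le> q * card (Fsub q :: 'a set)"
    using image_le by simp
  finally show ?thesis
    using kernel_le q_ge_2 by simp
qed

end

section \<open>The dimension of a cyclic code\<close>

definition word_poly :: "nat \<Rightarrow> (nat \<Rightarrow> 'a::comm_monoid_add) \<Rightarrow> 'a poly" where
  "word_poly n c = (\<Sum>i<n. monom (c i) i)"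

lemma coeff_word_poly: "coeff (word_poly n c) i = (if i < n then c i else 0)"
  by (simp add: word_poly_def coeff_sum coeff_monom)

lemma poly_word_poly:
  fixes c :: "nat \<Rightarrow> 'a::comm_semiring_1"
  shows "poly (word_poly n c) x = (\<Sum>i<n. c i * x ^ i)"
  by (simp add: word_poly_def poly_sum poly_monom)

lemma degree_word_poly_less: "word_poly n c \<noteq> 0 \<Longrightarrow> degree (word_poly n c) < n"
  by (metis coeff_word_poly leading_coeff_0_iff)

lemma word_poly_cyc_code: "c \<in> cyc_code q n Z \<Longrightarrow> gen_poly Z dvd word_poly n c"
  by (simp add: cyc_code_def word_poly_def)

lemma cyc_code_root_sum:
  fixes Z :: "'a::{field,finite} set"
  assumes "c \<in> cyc_code q n Z" "\<beta> \<in> Z"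
  shows "(\<Sum>i<n. c i * \<beta> ^ i) = 0"
proof -
  obtain h where "word_poly n c = gen_poly Z * h"
    using word_poly_cyc_code[OF assms(1)] by (rule dvdE)
  then show ?thesis
    using assms(2) by (simp flip: poly_word_poly add: gen_poly_def poly_prod)
qed

lemma gen_poly_nonzero: "gen_poly (Z :: 'a::field set) \<noteq> 0"
  by (cases "finite Z") (simp_all add: gen_poly_def)

lemma degree_gen_poly: "degree (gen_poly (Z :: 'a::field set)) = card Z"
  by (simp add: gen_poly_def degree_prod_eq_sum_degree)

definition frobenius_poly :: "nat \<Rightarrow> 'a::comm_ring_1 poly \<Rightarrow> 'a poly" where
  "frobenius_poly q p = map_poly (\<lambda>x. x ^ q) p"

definition polys_over :: "'a set \<Rightarrow> nat \<Rightarrow> 'a::zero poly set" where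
  "polys_over F k = {h. (\<forall>j. coeff h j \<in> F) \<and> (\<forall>j\<ge>k. coeff h j = 0)}"

lemma card_polys_over:
  fixes F :: "'a::comm_monoid_add set"
  assumes "0 \<in> F" "finite F"
  shows "card (polys_over F k) = card F ^ k"
proof -
  have "bij_betw (\<lambda>h. restrict (coeff h) {..<k}) (polys_over F k) (PiE {..<k} (\<lambda>_. F))"
  proof (rule bij_betwI')
    fix h h' assume "h \<in> polys_over F k" "h' \<in> polys_over F k"
    then show "(restrict (coeff h) {..<k} = restrict (coeff h') {..<k}) = (h = h')"
      by (auto simp: polys_over_def poly_eq_iff fun_eq_iff restrict_def) (metis not_le)
  next
    fix h assume "h \<in> polys_over F k"
    then show "restrict (coeff h) {..<k} \<in> PiE {..<k} (\<lambda>_. F)"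
      by (auto simp: polys_over_def)
  next
    fix f assume f: "f \<in> PiE {..<k} (\<lambda>_. F)"
    define h where "h = (\<Sum>j<k. monom (f j) j)"
    have coeff_h: "coeff h j = (if j < k then f j else 0)" for j
      by (simp add: h_def coeff_sum coeff_monom)
    then have "h \<in> polys_over F k" and "f = restrict (coeff h) {..<k}"
      using f assms(1) by (auto simp: polys_over_def fun_eq_iff PiE_def extensional_def)
    then show "\<exists>h\<in>polys_over F k. f = restrict (coeff h) {..<k}"
      by blast
  qed
  then show ?thesis
    using assms(2) by (simp add: bij_betw_same_card card_PiE)
qed

lemma degree_polys_over_less:
  assumes "h \<in> polys_over F k" "h \<noteq> 0"
  shows "degree h < k"
proof (rule ccontr)
  assume "\<not> degree h < k"
  then have "coeff h (degree h) = 0"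
    using assms(1) by (simp add: polys_over_def)
  then show False
    using assms(2) by simp
qed

context field_of_order_q_squared
begin

lemma coeff_frobenius_poly: "coeff (frobenius_poly q (p :: 'a poly)) i = coeff p i ^ q"
  unfolding frobenius_poly_def using q_ge_2 by (subst coeff_map_poly) (auto simp: power_0_left)

lemma frobenius_poly_mult: "frobenius_poly q (a * b :: 'a poly) = frobenius_poly q a * frobenius_poly q b"
  by (rule poly_eqI) (simp add: coeff_frobenius_poly coeff_mult frobenius_sum power_mult_distrib)

lemma frobenius_poly_fixed_iff: "frobenius_poly q (p :: 'a poly) = p \<longleftrightarrow> (\<forall>i. coeff p i \<in> Fsub q)"
  by (auto simp: poly_eq_iff coeff_frobenius_poly Fsub_def)

lemma frobenius_poly_gen_poly:
  assumes "(\<lambda>x. x ^ q) ` Z = Z"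
  shows "frobenius_poly q (gen_poly (Z :: 'a set)) = gen_poly Z"
proof -
  have one: "frobenius_poly q (1 :: 'a poly) = 1"
    using q_ge_2 by (intro poly_eqI) (simp add: coeff_frobenius_poly coeff_1 power_0_left)
  have prod: "frobenius_poly q (prod f A) = (\<Prod>x\<in>A. frobenius_poly q (f x))"
    for f :: "'b \<Rightarrow> 'a poly" and A
    by (induction A rule: infinite_finite_induct) (auto simp: frobenius_poly_mult one)
  have linear: "frobenius_poly q [:- b, 1:] = [:- (b ^ q), 1:]" for b :: 'a
    using q_ge_2 by (intro poly_eqI) (auto simp: coeff_frobenius_poly coeff_pCons frobenius_minus split: nat.splits)
  have "frobenius_poly q (gen_poly Z) = (\<Prod>\<beta>\<in>Z. [:- (\<beta> ^ q), 1:])"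
    by (simp add: gen_poly_def prod linear)
  also have "\<dots> = (\<Prod>\<beta>\<in>(\<lambda>x. x ^ q) ` Z. [:- \<beta>, 1:])"
    using inj_frobenius by (subst prod.reindex) (auto simp: inj_on_def inj_def)
  finally show ?thesis
    using assms by (simp add: gen_poly_def)
qed

lemma coeff_gen_poly_Fsub:
  assumes "(\<lambda>x. x ^ q) ` Z = Z"
  shows "coeff (gen_poly (Z :: 'a set)) i \<in> Fsub q"
  using frobenius_poly_gen_poly[OF assms] frobenius_poly_fixed_iff by auto

lemma multiple_in_cyc_code:
  fixes Z :: "'a set"
  assumes frob: "(\<lambda>x. x ^ q) ` Z = Z" and "card Z \<le> n"
    and h: "h \<in> polys_over (Fsub q) (n - card Z)"
  shows "(\<lambda>j. coeff (gen_poly Z * h) j) \<in> cyc_code q n Z"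
proof -
  define g where "g = gen_poly Z"
  have high: "coeff (g * h) j = 0" if "j \<ge> n" for j
  proof (cases "h = 0")
    case False
    then have "degree (g * h) < n"
      using degree_polys_over_less[OF h] assms(2)
      by (simp add: g_def degree_mult_eq gen_poly_nonzero degree_gen_poly)
    then show ?thesis
      using that by (intro coeff_eq_0) auto
  qed simp
  then have "word_poly n (\<lambda>j. coeff (g * h) j) = g * h"
    by (intro poly_eqI) (simp add: coeff_word_poly)
  moreover have "coeff (g * h) j \<in> Fsub q" for j
    using h coeff_gen_poly_Fsub[OF frob]
    by (auto simp: g_def coeff_mult polys_over_def intro!: Fsub_sum Fsub_mult)
  ultimately show ?thesis
    using high by (auto simp: cyc_code_def g_def word_poly_def)
qed

text \<open>Applying the Frobenius map to \<open>c = g h\<close>, where \<open>c\<close> and the generator \<open>g\<close> have coefficients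
  in \<open>Fsub q\<close>, shows that so has \<open>h\<close>.\<close>

lemma cyc_code_obtain_multiple:
  fixes Z :: "'a set"
  assumes frob: "(\<lambda>x. x ^ q) ` Z = Z" and c: "c \<in> cyc_code q n Z"
  shows "\<exists>h\<in>polys_over (Fsub q) (n - card Z). c = (\<lambda>j. coeff (gen_poly Z * h) j)"
proof -
  define g where "g = gen_poly Z"
  have g_nonzero: "g \<noteq> 0"
    by (simp add: g_def gen_poly_nonzero)
  obtain h where ch: "word_poly n c = g * h"
    using word_poly_cyc_code[OF c] by (auto simp: g_def elim: dvdE)
  have "frobenius_poly q (word_poly n c) = word_poly n c"
    using c by (auto simp: frobenius_poly_fixed_iff coeff_word_poly cyc_code_def Fsub_zero)
  then have "g * frobenius_poly q h = g * h"
    using ch frobenius_poly_gen_poly[OF frob] by (metis frobenius_poly_mult g_def)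
  then have h_Fsub: "coeff h j \<in> Fsub q" for j
    using g_nonzero frobenius_poly_fixed_iff by auto
  have "coeff h j = 0" if "j \<ge> n - card Z" for j
  proof (cases "h = 0")
    case False
    then have "degree (word_poly n c) < n"
      using ch g_nonzero by (intro degree_word_poly_less) simp
    then have "degree h < n - card Z"
      using ch degree_mult_eq[OF g_nonzero False] by (simp add: g_def degree_gen_poly)
    then show ?thesis
      using that by (intro coeff_eq_0) auto
  qed simp
  moreover have "c = (\<lambda>j. coeff (g * h) j)"
    using c by (auto simp: fun_eq_iff cyc_code_def coeff_word_poly simp flip: ch)
  ultimately show ?thesis
    using h_Fsub by (auto simp: polys_over_def g_def)
qed

lemma cyc_code_eq_multiples:
  fixes Z :: "'a set"
  assumes "(\<lambda>x. x ^ q) ` Z = Z" and "card Z \<le> n"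
  shows "bij_betw (\<lambda>h j. coeff (gen_poly Z * h) j) (polys_over (Fsub q) (n - card Z)) (cyc_code q n Z)"
proof (rule bij_betwI')
  show "((\<lambda>j. coeff (gen_poly Z * h) j) = (\<lambda>j. coeff (gen_poly Z * h') j)) = (h = h')" for h h'
    using gen_poly_nonzero by (metis coeff_inject mult_left_cancel)
qed (use assms multiple_in_cyc_code cyc_code_obtain_multiple in auto)

lemma card_cyc_code:
  fixes Z :: "'a set"
  assumes "(\<lambda>x. x ^ q) ` Z = Z" and "card Z \<le> n"
  shows "card (cyc_code q n Z) = q ^ (n - card Z)"
proof -
  have "card (cyc_code q n Z) = card (polys_over (Fsub q :: 'a set) (n - card Z))"
    using bij_betw_same_card[OF cyc_code_eq_multiples[OF assms]] by simp
  also have "\<dots> = q ^ (n - card Z)"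
    using card_polys_over[OF Fsub_zero] card_Fsub by simp
  finally show ?thesis .
qed

end

section \<open>The BCH bound and locality\<close>

text \<open>If \<open>\<Sum>\<^sub>t y\<^sub>t x\<^sub>t\<^sup>j = 0\<close> for \<open>j < D\<close> with \<open>D \<ge> |T|\<close>, evaluate the polynomial vanishing at all
  \<open>x\<^sub>t\<close> but one, of degree \<open>|T| - 1 < D\<close>.\<close>

lemma card_gt_if_power_sums_vanish:
  fixes x y :: "'b \<Rightarrow> 'a::field"
  assumes "finite T" "T \<noteq> {}" "inj_on x T" "\<forall>t\<in>T. y t \<noteq> 0"
    and vanish: "\<forall>j<D. (\<Sum>t\<in>T. y t * x t ^ j) = 0"
  shows "D < card T"
proof (rule ccontr)
  assume "\<not> D < card T"
  obtain t0 where t0: "t0 \<in> T"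
    using assms(2) by blast
  define p where "p = (\<Prod>s\<in>T - {t0}. [:- x s, 1:])"
  have "degree p = card (T - {t0})"
    unfolding p_def by (subst degree_prod_eq_sum_degree) auto
  then have degree_p: "degree p < D"
    using \<open>\<not> D < card T\<close> t0 assms(1) card_gt_0_iff[of T] by auto
  have "(\<Sum>t\<in>T. y t * poly p (x t)) = (\<Sum>i\<le>degree p. coeff p i * (\<Sum>t\<in>T. y t * x t ^ i))"
    by (simp add: poly_altdef sum_distrib_left sum_distrib_right mult_ac sum.swap[of _ T])
  also have "\<dots> = 0"
    using vanish degree_p by (intro sum.neutral) auto
  finally have "(\<Sum>t\<in>T. y t * poly p (x t)) = 0" .
  moreover have "(\<Sum>t\<in>T - {t0}. y t * poly p (x t)) = 0"
    by (intro sum.neutral) (auto simp: p_def poly_prod assms(1))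
  ultimately have "y t0 * poly p (x t0) = 0"
    using assms(1) t0 by (simp add: sum.remove)
  moreover have "poly p (x t0) \<noteq> 0"
    using assms(1,3) t0 by (auto simp: p_def poly_prod inj_on_def)
  ultimately show False
    using assms(4) t0 by simp
qed

locale cyclic_code_setting = field_of_order_q_squared q ty for q and ty :: "'a::{field,finite} itself" +
  fixes n :: nat and \<alpha> :: 'a
  assumes n_dvd: "n dvd q + 1"
    and alpha_power_n: "\<alpha> ^ n = 1"
    and alpha_primitive: "\<forall>k. 0 < k \<and> k < n \<longrightarrow> \<alpha> ^ k \<noteq> 1"
begin

lemma n_pos: "n > 0"
  using n_dvd by (auto intro!: Nat.gr0I)

lemma alpha_nonzero: "\<alpha> \<noteq> 0"
  using alpha_power_n n_pos by (auto simp: power_0_left)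

lemma alpha_power_inj:
  assumes "u < n" "v < n" "\<alpha> ^ u = \<alpha> ^ v"
  shows "u = v"
proof -
  have "\<alpha> ^ (b - a) = 1" if "a < b" "\<alpha> ^ a = \<alpha> ^ b" for a b
  proof -
    have "\<alpha> ^ b = \<alpha> ^ a * \<alpha> ^ (b - a)"
      using \<open>a < b\<close> by (simp flip: power_add)
    then show ?thesis
      using that alpha_nonzero by simp
  qed
  then show ?thesis
    using assms alpha_primitive by (cases u v rule: linorder_cases) force+
qed

lemma rpow_eq_power_int: "rpow \<alpha> n j = \<alpha> powi j"
proof -
  have "\<alpha> powi j = \<alpha> powi (j mod int n) * (\<alpha> powi int n) powi (j div int n)"
    using alpha_nonzero by (metis mod_mult_div_eq power_int_add power_int_mult add.commute mult.commute)
  also have "\<dots> = \<alpha> ^ nat (j mod int n)"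
    using n_pos alpha_power_n by (simp add: power_int_of_nat flip: power_int_of_nat[of _ "nat _"])
  finally show ?thesis
    by (simp add: rpow_def)
qed

lemma rpow_add: "rpow \<alpha> n (a + b) = rpow \<alpha> n a * rpow \<alpha> n b"
  using alpha_nonzero by (simp add: rpow_eq_power_int power_int_add)

lemma rpow_power: "rpow \<alpha> n a ^ u = rpow \<alpha> n (a * int u)"
  by (simp add: rpow_eq_power_int power_int_power')

lemma rpow_of_nat: "rpow \<alpha> n (int u) = \<alpha> ^ u"
  by (simp add: rpow_eq_power_int)

lemma rpow_eq_iff: "rpow \<alpha> n a = rpow \<alpha> n b \<longleftrightarrow> a mod int n = b mod int n"
proof
  assume "rpow \<alpha> n a = rpow \<alpha> n b"
  then have "nat (a mod int n) = nat (b mod int n)"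
    unfolding rpow_def using n_pos by (intro alpha_power_inj) (auto simp: nat_less_iff)
  moreover have "a mod int n \<ge> 0" "b mod int n \<ge> 0"
    using n_pos by simp_all
  ultimately show "a mod int n = b mod int n"
    by (metis nat_0_le)
qed (simp add: rpow_def)

lemma rpow_eq_one_iff: "rpow \<alpha> n a = 1 \<longleftrightarrow> int n dvd a"
  using rpow_eq_iff[of a 0] by (simp add: rpow_def mod_eq_0_iff_dvd)

text \<open>Since \<open>q \<equiv> -1 (mod n)\<close>, the Frobenius map acts on the \<open>n\<close>-th roots of unity as inversion.\<close>

lemma rpow_frobenius: "rpow \<alpha> n a ^ q = rpow \<alpha> n (- a)"
proof -
  obtain t where "q + 1 = n * t"
    using n_dvd by (auto elim: dvdE)
  then have q_eq: "int q = int n * int t - 1"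
    by (metis add_diff_cancel_right' of_nat_1 of_nat_add of_nat_mult)
  have "a * int q = - a + int n * (a * int t)"
    unfolding q_eq by (simp add: algebra_simps)
  then show ?thesis
    unfolding rpow_power rpow_eq_iff by (simp only: mod_mult_self2)
qed

lemma of_nat_divisor_nonzero:
  assumes "\<nu> dvd n"
  shows "of_nat \<nu> \<noteq> (0 :: 'a)"
proof
  assume "of_nat \<nu> = (0 :: 'a)"
  then have "CHAR('a) dvd q + 1"
    using dvd_trans[OF _ dvd_trans[OF assms n_dvd]] by (simp add: of_nat_eq_0_iff_char_dvd)
  moreover have "CHAR('a) dvd q"
    using q_eq_CHAR_power by (auto simp: dvd_power)
  ultimately have "CHAR('a) dvd (q + 1) - q"
    by (intro dvd_diff_nat)
  then have "CHAR('a) dvd 1"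
    by simp
  then show False
    using prime_CHAR by simp
qed

lemma setmul_rpow_image:
  "setmul (rpow \<alpha> n ` A) (rpow \<alpha> n ` B) = rpow \<alpha> n ` {a + b | a b. a \<in> A \<and> b \<in> B}"
proof (rule Set.set_eqI)
  fix x
  have "x \<in> setmul (rpow \<alpha> n ` A) (rpow \<alpha> n ` B) \<longleftrightarrow> (\<exists>a\<in>A. \<exists>b\<in>B. x = rpow \<alpha> n (a + b))"
    by (auto simp: setmul_def rpow_add)
  also have "\<dots> \<longleftrightarrow> x \<in> rpow \<alpha> n ` {a + b | a b. a \<in> A \<and> b \<in> B}"
    by blast
  finally show "x \<in> setmul (rpow \<alpha> n ` A) (rpow \<alpha> n ` B) \<longleftrightarrow> x \<in> rpow \<alpha> n ` {a + b | a b. a \<in> A \<and> b \<in> B}" .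
qed

lemma code_difference_vanishes:
  assumes "c \<in> cyc_code q n (rpow \<alpha> n ` E)" "c' \<in> cyc_code q n (rpow \<alpha> n ` E)" "t \<in> E"
  shows "(\<Sum>u<n. (c u - c' u) * rpow \<alpha> n (t * int u)) = 0"
  using cyc_code_root_sum[OF assms(1), of "rpow \<alpha> n t"] cyc_code_root_sum[OF assms(2), of "rpow \<alpha> n t"]
    assms(3)
  by (simp add: rpow_power left_diff_distrib sum_subtractf)

lemma bch_bound:
  assumes "S \<subseteq> {..<n}" "\<exists>u\<in>S. c u \<noteq> c' u"
    and vanish: "\<And>j. j < D \<Longrightarrow> (\<Sum>u\<in>S. (c u - c' u) * rpow \<alpha> n ((s + int j) * int u)) = 0"
  shows "D < card {u\<in>S. c u \<noteq> c' u}"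
proof -
  define T where "T = {u\<in>S. c u \<noteq> c' u}"
  have "finite S"
    using assms(1) finite_subset by blast
  have shift: "rpow \<alpha> n (s * int t) * (\<alpha> ^ t) ^ j = rpow \<alpha> n ((s + int j) * int t)" for t j
    unfolding rpow_of_nat[symmetric] rpow_power rpow_add[symmetric] by (simp add: algebra_simps)
  have "(\<Sum>t\<in>T. (c t - c' t) * rpow \<alpha> n (s * int t) * (\<alpha> ^ t) ^ j) = 0" if "j < D" for j
  proof -
    have "(\<Sum>t\<in>T. (c t - c' t) * rpow \<alpha> n (s * int t) * (\<alpha> ^ t) ^ j)
        = (\<Sum>t\<in>S. (c t - c' t) * rpow \<alpha> n ((s + int j) * int t))"
      using \<open>finite S\<close> by (intro sum.mono_neutral_cong_left) (auto simp: T_def mult.assoc shift)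
    then show ?thesis
      using vanish[OF that] by simp
  qed
  moreover have "inj_on (\<lambda>u. \<alpha> ^ u) T"
    using assms(1) by (auto simp: inj_on_def T_def intro: alpha_power_inj)
  moreover have "\<forall>t\<in>T. (c t - c' t) * rpow \<alpha> n (s * int t) \<noteq> 0"
    by (auto simp: T_def rpow_eq_power_int alpha_nonzero)
  ultimately show ?thesis
    unfolding T_def[symmetric] using assms(2) \<open>finite S\<close>
    by (intro card_gt_if_power_sums_vanish[where x = "\<lambda>u. \<alpha> ^ u"
          and y = "\<lambda>u. (c u - c' u) * rpow \<alpha> n (s * int u)"]) (auto simp: T_def)
qed

text \<open>Orthogonality of the characters \<open>h \<mapsto> \<alpha>\<^bsup>hm\<^esup>\<close> of the group of \<open>\<nu>\<close>-th roots of unity.\<close>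

lemma sum_rpow_residue_indicator:
  assumes "n = \<nu> * m" "m > 0" "i0 < \<nu>"
  shows "(\<Sum>h<\<nu>. rpow \<alpha> n (int m * (int u - int i0) * int h)) = (if u mod \<nu> = i0 then of_nat \<nu> else 0)"
proof -
  define \<rho> where "\<rho> = rpow \<alpha> n (int m * (int u - int i0))"
  have sum_eq: "(\<Sum>h<\<nu>. rpow \<alpha> n (int m * (int u - int i0) * int h)) = (\<Sum>h<\<nu>. \<rho> ^ h)"
    by (simp add: \<rho>_def rpow_power)
  have "\<rho> = 1 \<longleftrightarrow> int n dvd int m * (int u - int i0)"
    by (simp add: \<rho>_def rpow_eq_one_iff)
  also have "\<dots> \<longleftrightarrow> int \<nu> dvd int u - int i0"
    using assms(1,2) by (simp add: mult.commute)
  also have "\<dots> \<longleftrightarrow> u mod \<nu> = i0"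
    using assms(3) by (metis mod_eq_dvd_iff mod_less of_nat_eq_iff of_nat_mod)
  finally have \<rho>_one: "\<rho> = 1 \<longleftrightarrow> u mod \<nu> = i0" .
  have "\<rho> ^ \<nu> = 1"
    unfolding \<rho>_def rpow_power rpow_eq_one_iff using assms(1) by (simp add: algebra_simps)
  then show ?thesis
    unfolding sum_eq using \<rho>_one by (auto simp: sum_gp_strict)
qed

lemma residue_class_sum_vanishes:
  assumes "n = \<nu> * m" "m > 0" "\<nu> dvd n"
    and c: "c \<in> cyc_code q n (rpow \<alpha> n ` E)" and c': "c' \<in> cyc_code q n (rpow \<alpha> n ` E)"
    and shifts: "\<forall>h<\<nu>. s + int h * int m \<in> E" and "i0 < \<nu>"
  shows "(\<Sum>u\<in>{u. u < n \<and> u mod \<nu> = i0}. (c u - c' u) * rpow \<alpha> n (s * int u)) = 0"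
proof -
  define w where "w u = (c u - c' u) * rpow \<alpha> n (s * int u)" for u
  define \<chi> where "\<chi> u h = rpow \<alpha> n (int m * (int u - int i0) * int h)" for u h
  have twist: "rpow \<alpha> n (- (int i0 * int h * int m)) * ((c u - c' u) * rpow \<alpha> n ((s + int h * int m) * int u))
      = w u * \<chi> u h" for h u
    unfolding w_def \<chi>_def mult.assoc[symmetric] rpow_add[symmetric]
    by (simp add: algebra_simps flip: rpow_add)
  have "0 = (\<Sum>h<\<nu>. rpow \<alpha> n (- (int i0 * int h * int m)) *
             (\<Sum>u<n. (c u - c' u) * rpow \<alpha> n ((s + int h * int m) * int u)))"
    using code_difference_vanishes[OF c c'] shifts by simp
  also have "\<dots> = (\<Sum>u<n. w u * (\<Sum>h<\<nu>. \<chi> u h))"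
    by (simp add: sum_distrib_left twist sum.swap[of _ "{..<\<nu>}"])
  also have "\<dots> = (\<Sum>u<n. if u mod \<nu> = i0 then w u * of_nat \<nu> else 0)"
    unfolding \<chi>_def sum_rpow_residue_indicator[OF assms(1,2,7)] by (intro sum.cong) auto
  also have "\<dots> = (\<Sum>u\<in>{u. u < n \<and> u mod \<nu> = i0}. w u * of_nat \<nu>)"
    by (subst sum.inter_filter[symmetric]) simp_all
  finally show ?thesis
    using of_nat_divisor_nonzero[OF assms(3)] by (simp add: w_def flip: sum_distrib_right)
qed

lemma residue_class_weight_gt:
  assumes "n = \<nu> * m" "m > 0" "\<nu> dvd n"
    and c: "c \<in> cyc_code q n (rpow \<alpha> n ` E)" and c': "c' \<in> cyc_code q n (rpow \<alpha> n ` E)"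
    and grid: "\<forall>j<D. \<forall>h<\<nu>. s + int j + int h * int m \<in> E" and "i0 < \<nu>"
    and "\<exists>u<n. u mod \<nu> = i0 \<and> c u \<noteq> c' u"
  shows "D < card {u. u < n \<and> u mod \<nu> = i0 \<and> c u \<noteq> c' u}"
proof -
  have "D < card {u\<in>{u. u < n \<and> u mod \<nu> = i0}. c u \<noteq> c' u}"
    using assms(8) grid
    by (intro bch_bound[where s = s] residue_class_sum_vanishes[OF assms(1-3) c c' _ assms(7)]) auto
  then show ?thesis
    by (simp add: conj_assoc)
qed

end

section \<open>Counting and an upper bound on the minimum distance\<close>

lemma card_mod_div_filter:
  fixes \<nu> m :: nat
  assumes "\<nu> > 0"
  shows "card {u. u < \<nu> * m \<and> P (u mod \<nu>) (u div \<nu>)} = card {(a, b). a < \<nu> \<and> b < m \<and> P a b}"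
proof (rule bij_betw_same_card[of "\<lambda>u. (u mod \<nu>, u div \<nu>)"], rule bij_betw_byWitness)
  show "\<forall>u\<in>{u. u < \<nu> * m \<and> P (u mod \<nu>) (u div \<nu>)}. (\<lambda>(a, b). a + \<nu> * b) (u mod \<nu>, u div \<nu>) = u"
    by simp
  show "\<forall>ab\<in>{(a, b). a < \<nu> \<and> b < m \<and> P a b}. (\<lambda>u. (u mod \<nu>, u div \<nu>)) ((\<lambda>(a, b). a + \<nu> * b) ab) = ab"
    by auto
  show "(\<lambda>u. (u mod \<nu>, u div \<nu>)) ` {u. u < \<nu> * m \<and> P (u mod \<nu>) (u div \<nu>)} \<subseteq> {(a, b). a < \<nu> \<and> b < m \<and> P a b}"
    using assms by (auto simp: less_mult_imp_div_less mult.commute[of \<nu>])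
  have "a + \<nu> * b < \<nu> * m" if "a < \<nu>" "b < m" for a b
  proof -
    have "\<nu> * (b + 1) \<le> \<nu> * m"
      using that(2) by (intro mult_left_mono) auto
    then show ?thesis
      using that(1) by (simp add: algebra_simps)
  qed
  then show "(\<lambda>(a, b). a + \<nu> * b) ` {(a, b). a < \<nu> \<and> b < m \<and> P a b} \<subseteq> {u. u < \<nu> * m \<and> P (u mod \<nu>) (u div \<nu>)}"
    by auto
qed

lemma card_residue_class:
  assumes "g < \<nu>"
  shows "card {u. u < \<nu> * m \<and> u mod \<nu> = g} = m"
proof -
  have "{(a, b). a < \<nu> \<and> b < m \<and> a = g} = {g} \<times> {..<m}"
    using assms by auto
  then show ?thesis
    using card_mod_div_filter[of \<nu> m "\<lambda>a b. a = g"] assms by simp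
qed

lemma card_residue_class_upper:
  assumes "g < \<nu>"
  shows "card {u. u < \<nu> * m \<and> u mod \<nu> = g \<and> r \<le> u div \<nu>} = m - r"
proof -
  have "{(a, b). a < \<nu> \<and> b < m \<and> a = g \<and> r \<le> b} = {g} \<times> {r..<m}"
    using assms by auto
  then show ?thesis
    using card_mod_div_filter[of \<nu> m "\<lambda>a b. a = g \<and> r \<le> b"] assms by simp
qed

lemma card_residue_classes_lower:
  assumes "G \<le> \<nu>" "r \<le> m" "\<nu> > 0"
  shows "card {u. u < \<nu> * m \<and> u mod \<nu> < G \<and> u div \<nu> < r} = G * r"
proof -
  have "{(a, b). a < \<nu> \<and> b < m \<and> a < G \<and> b < r} = {..<G} \<times> {..<r}"
    using assms by auto
  then show ?thesis
    using card_mod_div_filter[of \<nu> m "\<lambda>a b. a < G \<and> b < r"] assms by simp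
qed

lemma card_residue_classes_from:
  assumes "\<nu> > 0"
  shows "card {u. u < \<nu> * m \<and> G \<le> u mod \<nu>} = (\<nu> - G) * m"
proof -
  have "{(a, b). a < \<nu> \<and> b < m \<and> G \<le> a} = {G..<\<nu>} \<times> {..<m}"
    by auto
  then show ?thesis
    using card_mod_div_filter[of \<nu> m "\<lambda>a b. G \<le> a"] assms by simp
qed

lemma min_dist_eqI:
  fixes C :: "(nat \<Rightarrow> 'a) set"
  assumes lower: "\<forall>c\<in>C. \<forall>c'\<in>C. c \<noteq> c' \<longrightarrow> d \<le> hdist {..<n} c c'"
    and upper: "\<exists>c\<in>C. \<exists>c'\<in>C. c \<noteq> c' \<and> hdist {..<n} c c' \<le> d"
  shows "min_dist n C = d"
proof -
  define X where "X = {hdist {..<n} c c' | c c'. c \<in> C \<and> c' \<in> C \<and> c \<noteq> c'}"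
  have hdist_le: "hdist {..<n} c c' \<le> n" for c c' :: "nat \<Rightarrow> 'a"
    unfolding hdist_def by (rule order.trans[OF card_mono[of "{..<n}"]]) auto
  have finite: "finite X"
    by (rule finite_subset[of _ "{..n}"]) (auto simp: X_def hdist_le)
  have nonempty: "X \<noteq> {}"
    using upper by (auto simp: X_def)
  obtain c c' where "c \<in> C" "c' \<in> C" "c \<noteq> c'" "hdist {..<n} c c' \<le> d"
    using upper by blast
  then have "Min X \<le> d"
    by (intro Min_le_iff[THEN iffD2, OF finite nonempty]) (auto simp: X_def)
  moreover have "d \<le> Min X"
    using finite nonempty lower by (auto simp: X_def)
  ultimately show ?thesis
    by (simp add: min_dist_def X_def)
qed

context field_of_order_q_squared
begin

lemma exists_distinct_agreeing_on:
  fixes C :: "(nat \<Rightarrow> 'a) set"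
  assumes "finite U" "\<forall>c\<in>C. \<forall>u\<in>U. c u \<in> Fsub q" "card C > q ^ card U"
  obtains c c' where "c \<in> C" "c' \<in> C" "c \<noteq> c'" "\<forall>u\<in>U. c u = c' u"
proof -
  have "(\<lambda>c. restrict c U) ` C \<subseteq> PiE U (\<lambda>_. Fsub q)"
    using assms(2) by auto
  then have "card ((\<lambda>c. restrict c U) ` C) \<le> card (PiE U (\<lambda>_. Fsub q :: 'a set))"
    by (intro card_mono) (simp_all add: finite_PiE assms(1))
  also have "\<dots> = q ^ card U"
    using assms(1) card_Fsub by (simp add: card_PiE)
  finally have "card ((\<lambda>c. restrict c U) ` C) \<le> q ^ card U" .
  then have "\<not> inj_on (\<lambda>c. restrict c U) C"
    using assms(3) card_image by fastforce
  then show ?thesis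
    using that by (auto simp: inj_on_def restrict_def fun_eq_iff) metis
qed

lemma eq_on_residue_class_if_eq_on_first_rows:
  assumes "g < \<nu>" and agree: "\<forall>u<\<nu> * m. u mod \<nu> = g \<and> u div \<nu> < r \<longrightarrow> c u = c' u"
    and locality: "(\<exists>u<\<nu> * m. u mod \<nu> = g \<and> c u \<noteq> c' u) \<longrightarrow>
      m - r < card {u. u < \<nu> * m \<and> u mod \<nu> = g \<and> c u \<noteq> c' u}"
  shows "\<forall>u<\<nu> * m. u mod \<nu> = g \<longrightarrow> c u = c' u"
proof (rule ccontr)
  assume "\<not> (\<forall>u<\<nu> * m. u mod \<nu> = g \<longrightarrow> c u = c' u)"
  then have "m - r < card {u. u < \<nu> * m \<and> u mod \<nu> = g \<and> c u \<noteq> c' u}"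
    using locality by blast
  also have "\<dots> \<le> card {u. u < \<nu> * m \<and> u mod \<nu> = g \<and> r \<le> u div \<nu>}"
    using agree by (intro card_mono) auto
  also have "\<dots> = m - r"
    using card_residue_class_upper assms(1) by simp
  finally show False
    by simp
qed

text \<open>Pigeonhole gives two codewords agreeing on \<open>r\<close> positions of each of the first \<open>G\<close> repair
  groups and on \<open>e\<close> positions outside them; since \<open>m - r\<close> positions of a group do not
  suffice to separate codewords, they agree on these whole groups.\<close>

lemma min_dist_upper_bound:
  fixes C :: "(nat \<Rightarrow> 'a) set" and \<nu> m r G e k :: nat
  assumes "\<nu> > 0" "r \<le> m" "G \<le> \<nu>" "G * r + e + 1 = k" "e \<le> (\<nu> - G) * m"
    and card_C: "card C = q ^ k" and C_Fsub: "\<forall>c\<in>C. \<forall>u<\<nu> * m. c u \<in> Fsub q"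
    and locality: "\<forall>c\<in>C. \<forall>c'\<in>C. \<forall>g<G. (\<exists>u<\<nu> * m. u mod \<nu> = g \<and> c u \<noteq> c' u) \<longrightarrow>
          m - r < card {u. u < \<nu> * m \<and> u mod \<nu> = g \<and> c u \<noteq> c' u}"
  shows "\<exists>c\<in>C. \<exists>c'\<in>C. c \<noteq> c' \<and> hdist {..<\<nu> * m} c c' \<le> \<nu> * m - (G * m + e)"
proof -
  define outer where "outer = {u. u < \<nu> * m \<and> G \<le> u mod \<nu>}"
  define inner where "inner = {u. u < \<nu> * m \<and> u mod \<nu> < G \<and> u div \<nu> < r}"
  obtain E0 where E0: "E0 \<subseteq> outer" "card E0 = e" "finite E0"
    using obtain_subset_with_card_n[of e outer] assms(5) card_residue_classes_from[OF assms(1)]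
    by (auto simp: outer_def)
  have "inner \<inter> E0 = {}"
    using E0 by (auto simp: inner_def outer_def)
  then have "card (inner \<union> E0) = G * r + e"
    using card_residue_classes_lower[OF assms(3,2,1)] E0 by (simp add: inner_def card_Un_disjoint)
  then have card_lt: "q ^ card (inner \<union> E0) < card C"
    using card_C q_ge_2 assms(4) by (auto intro: power_strict_increasing)
  have Fsub: "\<forall>c\<in>C. \<forall>u\<in>inner \<union> E0. c u \<in> Fsub q"
    using C_Fsub E0(1) by (auto simp: inner_def outer_def)
  have "finite (inner \<union> E0)"
    using E0(3) by (simp add: inner_def)
  then obtain c c' where cc: "c \<in> C" "c' \<in> C" "c \<noteq> c'" and agree: "\<forall>u\<in>inner \<union> E0. c u = c' u"
    using exists_distinct_agreeing_on[OF _ Fsub card_lt] by blast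
  have "{u \<in> {..<\<nu> * m}. c u \<noteq> c' u} \<subseteq> outer - E0"
  proof
    fix u assume u: "u \<in> {u \<in> {..<\<nu> * m}. c u \<noteq> c' u}"
    have "G \<le> u mod \<nu>"
    proof (rule ccontr)
      assume "\<not> G \<le> u mod \<nu>"
      then have "(\<exists>u'<\<nu> * m. u' mod \<nu> = u mod \<nu> \<and> c u' \<noteq> c' u') \<longrightarrow>
          m - r < card {u'. u' < \<nu> * m \<and> u' mod \<nu> = u mod \<nu> \<and> c u' \<noteq> c' u'}"
        using locality cc(1,2) by simp
      moreover have "\<forall>u'<\<nu> * m. u' mod \<nu> = u mod \<nu> \<and> u' div \<nu> < r \<longrightarrow> c u' = c' u'"
        using agree \<open>\<not> G \<le> u mod \<nu>\<close> by (auto simp: inner_def)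
      moreover have "u mod \<nu> < \<nu>"
        using assms(1) by simp
      ultimately show False
        using eq_on_residue_class_if_eq_on_first_rows u by blast
    qed
    then show "u \<in> outer - E0"
      using u agree by (auto simp: outer_def)
  qed
  then have "hdist {..<\<nu> * m} c c' \<le> card (outer - E0)"
    unfolding hdist_def by (intro card_mono) (auto simp: outer_def)
  also have "\<dots> = (\<nu> - G) * m - e"
    using E0 card_residue_classes_from[OF assms(1)] by (simp add: card_Diff_subset outer_def)
  also have "\<dots> = \<nu> * m - (G * m + e)"
    by (simp add: diff_mult_distrib)
  finally show ?thesis
    using cc by blast
qed

end

section \<open>Optimal cyclic LRCs from a defining set of exponents\<close>

lemma ceiling_divide_eq:
  fixes G e r :: nat
  assumes "e < r"
  shows "\<lceil>real (G * r + e + 1) / real r\<rceil> = int G + 1"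
proof (rule ceiling_unique)
  have "r > 0"
    using assms by simp
  then show "real_of_int (int G + 1) - 1 < real (G * r + e + 1) / real r"
    by (simp add: field_simps)
  show "real (G * r + e + 1) / real r \<le> real_of_int (int G + 1)"
    using assms \<open>r > 0\<close> by (simp add: field_simps)
qed

context cyclic_code_setting
begin

lemma card_rpow_image:
  assumes "E \<subseteq> {L..<L + int n}"
  shows "card (rpow \<alpha> n ` E) = card E"
proof (rule card_image, rule inj_onI)
  fix a b assume "a \<in> E" "b \<in> E" "rpow \<alpha> n a = rpow \<alpha> n b"
  then have "(a - L) mod int n = (b - L) mod int n"
    by (intro mod_diff_cong) (simp_all add: rpow_eq_iff)
  moreover have "(a - L) mod int n = a - L" "(b - L) mod int n = b - L"
    using assms \<open>a \<in> E\<close> \<open>b \<in> E\<close> by (auto intro: mod_pos_pos_trivial)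
  ultimately show "a = b"
    by simp
qed

lemma frobenius_rpow_image:
  assumes "finite E" and negation_closed: "\<forall>t\<in>E. \<exists>t'\<in>E. t' mod int n = (- t) mod int n"
  shows "(\<lambda>x. x ^ q) ` rpow \<alpha> n ` E = rpow \<alpha> n ` E"
proof (rule card_subset_eq)
  show "(\<lambda>x. x ^ q) ` rpow \<alpha> n ` E \<subseteq> rpow \<alpha> n ` E"
  proof
    fix y assume "y \<in> (\<lambda>x. x ^ q) ` rpow \<alpha> n ` E"
    then obtain t where "t \<in> E" "y = rpow \<alpha> n t ^ q"
      by blast
    moreover obtain t' where "t' \<in> E" "t' mod int n = (- t) mod int n"
      using negation_closed \<open>t \<in> E\<close> by blast
    ultimately show "y \<in> rpow \<alpha> n ` E"
      by (metis image_eqI rpow_eq_iff rpow_frobenius)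
  qed
  show "card ((\<lambda>x. x ^ q) ` rpow \<alpha> n ` E) = card (rpow \<alpha> n ` E)"
    using inj_frobenius by (simp add: card_image inj_on_def inj_def)
qed (use assms in simp)

lemma cyc_code_min_dist_ge:
  assumes run: "\<forall>j<d - 1. s + int j \<in> E"
    and "c \<in> cyc_code q n (rpow \<alpha> n ` E)" "c' \<in> cyc_code q n (rpow \<alpha> n ` E)" "c \<noteq> c'"
  shows "d \<le> hdist {..<n} c c'"
proof -
  have "\<exists>u\<in>{..<n}. c u \<noteq> c' u"
  proof (rule ccontr)
    assume "\<not> (\<exists>u\<in>{..<n}. c u \<noteq> c' u)"
    then have "c u = c' u" for u
      using assms(2,3) by (cases "u < n") (auto simp: cyc_code_def)
    then show False
      using assms(4) by blast
  qed
  moreover have "(\<Sum>u\<in>{..<n}. (c u - c' u) * rpow \<alpha> n ((s + int j) * int u)) = 0" if "j < d - 1" for j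
    using run that code_difference_vanishes[OF assms(2,3)] by blast
  ultimately have "d - 1 < card {u\<in>{..<n}. c u \<noteq> c' u}"
    by (intro bch_bound) auto
  then show ?thesis
    by (simp add: hdist_def)
qed

lemma cyc_code_is_LRC:
  assumes "n = \<nu> * m" "m = r + \<delta> - 1" "m > 0"
    and grid: "\<forall>j<\<delta> - 1. \<forall>h<\<nu>. s + int j + int h * int m \<in> E"
  shows "is_LRC n r \<delta> (cyc_code q n (rpow \<alpha> n ` E))"
  unfolding is_LRC_def has_locality_def
proof (intro allI impI)
  fix i assume "i < n"
  have "\<nu> > 0"
    using \<open>i < n\<close> assms(1) by (auto intro!: Nat.gr0I)
  define S where "S = {u. u < n \<and> u mod \<nu> = i mod \<nu>}"
  have card_S: "card S = m"
    using card_residue_class[of "i mod \<nu>" \<nu> m] \<open>\<nu> > 0\<close> assms(1) by (simp add: S_def)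
  have "\<delta> \<le> hdist S c c'"
    if "c \<in> cyc_code q n (rpow \<alpha> n ` E)" "c' \<in> cyc_code q n (rpow \<alpha> n ` E)" "\<exists>j\<in>S. c j \<noteq> c' j" for c c'
  proof -
    have "\<delta> - 1 < card {u. u < n \<and> u mod \<nu> = i mod \<nu> \<and> c u \<noteq> c' u}"
      using that grid \<open>\<nu> > 0\<close> assms(1,3)
      by (intro residue_class_weight_gt[where s = s]) (auto simp: S_def)
    then show ?thesis
      by (simp add: hdist_def S_def conj_assoc)
  qed
  then show "\<exists>S. i \<in> S \<and> S \<subseteq> {..<n} \<and> card S \<le> r + \<delta> - 1 \<and>
      (\<forall>c\<in>cyc_code q n (rpow \<alpha> n ` E). \<forall>c'\<in>cyc_code q n (rpow \<alpha> n ` E).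
        (\<exists>j\<in>S. c j \<noteq> c' j) \<longrightarrow> \<delta> \<le> hdist S c c')"
    using \<open>i < n\<close> card_S assms(2) by (intro exI[of _ S]) (auto simp: S_def)
qed

lemma cyc_code_min_dist_le:
  fixes \<nu> m r \<delta> k G e :: nat
  assumes "n = \<nu> * m" "m = r + \<delta> - 1" "\<delta> \<ge> 2"
    and grid: "\<forall>j<\<delta> - 1. \<forall>h<\<nu>. s + int j + int h * int m \<in> E"
    and card_C: "card (cyc_code q n (rpow \<alpha> n ` E)) = q ^ k"
    and "k = G * r + e + 1" "e < r" "G < \<nu>"
  shows "\<exists>c\<in>cyc_code q n (rpow \<alpha> n ` E). \<exists>c'\<in>cyc_code q n (rpow \<alpha> n ` E).
      c \<noteq> c' \<and> hdist {..<n} c c' \<le> n - (G * m + e)"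
  unfolding assms(1)
proof (rule min_dist_upper_bound)
  show "\<forall>c\<in>cyc_code q (\<nu> * m) (rpow \<alpha> (\<nu> * m) ` E). \<forall>u<\<nu> * m. c u \<in> Fsub q"
    by (auto simp: cyc_code_def)
  show "\<forall>c\<in>cyc_code q (\<nu> * m) (rpow \<alpha> (\<nu> * m) ` E). \<forall>c'\<in>cyc_code q (\<nu> * m) (rpow \<alpha> (\<nu> * m) ` E).
      \<forall>g<G. (\<exists>u<\<nu> * m. u mod \<nu> = g \<and> c u \<noteq> c' u) \<longrightarrow>
        m - r < card {u. u < \<nu> * m \<and> u mod \<nu> = g \<and> c u \<noteq> c' u}"
  proof (intro ballI allI impI)
    fix c c' g
    assume "c \<in> cyc_code q (\<nu> * m) (rpow \<alpha> (\<nu> * m) ` E)" "c' \<in> cyc_code q (\<nu> * m) (rpow \<alpha> (\<nu> * m) ` E)"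
      and "g < G" "\<exists>u<\<nu> * m. u mod \<nu> = g \<and> c u \<noteq> c' u"
    then have "\<delta> - 1 < card {u. u < n \<and> u mod \<nu> = g \<and> c u \<noteq> c' u}"
      using assms(1-3,8) grid by (intro residue_class_weight_gt[where s = s and E = E]) auto
    then show "m - r < card {u. u < \<nu> * m \<and> u mod \<nu> = g \<and> c u \<noteq> c' u}"
      using assms(1,2) by simp
  qed
  have "1 * m \<le> (\<nu> - G) * m"
    using assms(8) by (intro mult_right_mono) auto
  then show "e \<le> (\<nu> - G) * m"
    using assms(2,7) by linarith
qed (use assms in auto)

text \<open>Closure under negation makes the code defined over \<open>F\<^sub>q\<close>, the run gives the BCH bound and
  the grid gives locality; \<open>k = G r + e + 1\<close> with \<open>e < r\<close> means \<open>G = \<lceil>k / r\<rceil> - 1\<close>.\<close>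

theorem optimal_LRC_of_defining_set:
  fixes E :: "int set" and \<nu> m r \<delta> k d G e :: nat
  assumes "n = \<nu> * m" "m = r + \<delta> - 1" "r \<ge> 1" "\<delta> \<ge> 2"
    and negation_closed: "\<forall>t\<in>E. \<exists>t'\<in>E. t' mod int n = (- t) mod int n"
    and window: "E \<subseteq> {L..<L + int n}"
    and run: "\<forall>j<d - 1. s + int j \<in> E"
    and grid: "\<forall>j<\<delta> - 1. \<forall>h<\<nu>. s' + int j + int h * int m \<in> E"
    and card_E: "card E + k = n"
    and "k = G * r + e + 1" "e < r" "G < \<nu>"
    and d: "d + G * (\<delta> - 1) + k = n + 1"
  shows "optimal_LRC_with q n r \<delta> (cyc_code q n (rpow \<alpha> n ` E)) k d"
proof -
  define C where "C = cyc_code q n (rpow \<alpha> n ` E)"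
  have "finite E"
    using window finite_subset by blast
  then have card_C: "card C = q ^ k"
    unfolding C_def using card_cyc_code frobenius_rpow_image[OF _ negation_closed]
      card_rpow_image[OF window] card_E by (metis add_diff_cancel_left' le_add1)
  have "m = r + (\<delta> - 1)"
    using assms(2,4) by simp
  then have "n - (G * m + e) = d"
    using assms(1,10) d by (simp add: add_mult_distrib2)
  then have "min_dist n C = d"
    using cyc_code_min_dist_le[OF assms(1,2,4) grid card_C[unfolded C_def] assms(10-12)]
      cyc_code_min_dist_ge[OF run] by (intro min_dist_eqI) (auto simp: C_def)
  moreover have "int d = int n - int k - (\<lceil>real k / real r\<rceil> - 1) * (int \<delta> - 1) + 1"
  proof -
    have "int d + int G * (int \<delta> - 1) + int k = int n + 1"
      using arg_cong[OF d, of int] assms(4) by (simp add: of_nat_diff)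
    then show ?thesis
      using ceiling_divide_eq[OF assms(11), of G] assms(10) by simp
  qed
  moreover have "m > 0"
    using assms(2-4) by simp
  ultimately show ?thesis
    using card_C cyc_code_is_LRC[OF assms(1,2) _ grid]
    unfolding optimal_LRC_with_def C_def by blast
qed

end

section \<open>The exponent sets of the corollary\<close>

lemma sumset_atLeastAtMost_int:
  fixes a1 a2 b1 b2 :: int
  assumes "a1 \<le> a2" "b1 \<le> b2"
  shows "{x + y | x y. x \<in> {a1..a2} \<and> y \<in> {b1..b2}} = {a1 + b1..a2 + b2}"
proof (rule Set.set_eqI, rule iffI)
  fix t assume t: "t \<in> {a1 + b1..a2 + b2}"
  define x where "x = max a1 (t - b2)"
  have "x \<in> {a1..a2}" "t - x \<in> {b1..b2}" "t = x + (t - x)"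
    using t assms by (auto simp: x_def)
  then show "t \<in> {x + y | x y. x \<in> {a1..a2} \<and> y \<in> {b1..b2}}"
    by blast
qed auto

text \<open>In the notation of the corollary, \<open>A\<close> is the image of the interval
  \<open>[\<sigma> - P - i - 1, P + i]\<close> together with the points \<open>P + e m\<close>, \<open>1 \<le> e \<le> K\<close>, and \<open>B\<close> that of
  \<open>[-(D - 1), D]\<close> with \<open>\<delta> = 2 D + 1\<close>; here \<open>\<sigma> \<in> {0, n}\<close> puts the interval symmetric about \<open>0\<close> or
  about \<open>n / 2\<close>.\<close>

locale exponent_layout =
  fixes P i D m K \<sigma> n \<nu> :: int
  assumes D_pos: "D \<ge> 1" and i_nonneg: "i \<ge> 0" and K_nonneg: "K \<ge> 0" and m_pos: "m > 0"
    and width: "2 * i + 2 * D < m"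
    and n_eq: "n = \<nu> * m" and K_less: "K + 1 < \<nu>"
    and P_eq: "2 * P = \<sigma> + n - (K + 1) * m - 1"
    and \<sigma>_cases: "\<sigma> = 0 \<or> \<sigma> = n"
begin

definition "A_exponents = {\<sigma> - (P + i) - 1 .. P + i} \<union> {P + e * m | e. 1 \<le> e \<and> e \<le> K}"

definition "B_exponents = {- (D - 1) .. D}"

definition "main_block = {\<sigma> - (P + i + D) .. P + i + D}"

definition "side_block e = {P + e * m - D + 1 .. P + e * m + D}"

definition "exponents = main_block \<union> (\<Union>e\<in>{1..K}. side_block e)"

lemma main_interval_nonempty: "\<sigma> - (P + i) - 1 \<le> P + i"
proof -
  have "(K + 2) * m \<le> \<nu> * m"
    using K_less m_pos by (intro mult_right_mono) auto
  then show ?thesis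
    using P_eq n_eq i_nonneg m_pos by (simp add: algebra_simps)
qed

lemma sumset_eq_exponents: "{x + y | x y. x \<in> A_exponents \<and> y \<in> B_exponents} = exponents"
proof -
  have "{x + y | x y. x \<in> A_exponents \<and> y \<in> B_exponents}
      = {x + y | x y. x \<in> {\<sigma> - (P + i) - 1 .. P + i} \<and> y \<in> B_exponents}
        \<union> (\<Union>e\<in>{1..K}. {x + y | x y. x \<in> {P + e * m .. P + e * m} \<and> y \<in> B_exponents})"
    unfolding A_exponents_def by fastforce
  also have "{x + y | x y. x \<in> {\<sigma> - (P + i) - 1 .. P + i} \<and> y \<in> B_exponents} = main_block"
    unfolding B_exponents_def main_block_def using main_interval_nonempty D_pos
    by (subst sumset_atLeastAtMost_int) (auto simp: algebra_simps)
  also have "(\<Union>e\<in>{1..K}. {x + y | x y. x \<in> {P + e * m .. P + e * m} \<and> y \<in> B_exponents})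
      = (\<Union>e\<in>{1..K}. side_block e)"
    unfolding B_exponents_def side_block_def using D_pos
    by (subst sumset_atLeastAtMost_int) (auto simp: algebra_simps)
  finally show ?thesis
    by (simp add: exponents_def)
qed

lemma exponents_negation_closed: "\<forall>t\<in>exponents. \<exists>t'\<in>exponents. t' mod n = (- t) mod n"
proof
  fix t assume t: "t \<in> exponents"
  show "\<exists>t'\<in>exponents. t' mod n = (- t) mod n"
  proof (cases "t \<in> main_block")
    case True
    then have "\<sigma> - t \<in> exponents"
      by (auto simp: exponents_def main_block_def)
    moreover have "(\<sigma> - t) mod n = (- t) mod n"
      using \<sigma>_cases by auto
    ultimately show ?thesis
      by blast
  next
    case False
    then obtain e where e: "1 \<le> e" "e \<le> K" "t \<in> side_block e"
      using t by (auto simp: exponents_def)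
    \<comment> \<open>side blocks are paired by \<open>e \<leftrightarrow> K + 1 - e\<close>\<close>
    have "\<sigma> + n - t \<in> side_block (K + 1 - e)"
      using e(3) P_eq by (auto simp: side_block_def algebra_simps)
    then have "\<sigma> + n - t \<in> exponents"
      using e by (auto simp: exponents_def)
    moreover have "(\<sigma> + n - t) mod n = (- t) mod n"
      using \<sigma>_cases mod_mult_self2[of "- t" n 1] mod_mult_self2[of "- t" n 2] by (auto simp: algebra_simps)
    ultimately show ?thesis
      by blast
  qed
qed

lemma side_block_bounds:
  assumes "1 \<le> e" "e \<le> K" "t \<in> side_block e"
  shows "P + m - D + 1 \<le> t" "t \<le> P + K * m + D"
proof -
  have "m \<le> e * m" "e * m \<le> K * m"
    using assms m_pos by (simp_all add: mult_le_cancel_right1 mult_right_mono)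
  then show "P + m - D + 1 \<le> t" "t \<le> P + K * m + D"
    using assms(3) by (auto simp: side_block_def)
qed

lemma exponents_window: "exponents \<subseteq> {\<sigma> - (P + i + D) ..< \<sigma> - (P + i + D) + n}"
proof -
  have "(K + 1) * m = K * m + m"
    by (simp add: algebra_simps)
  then have top: "P + K * m + D < \<sigma> - (P + i + D) + n"
    using P_eq width i_nonneg by linarith
  have "1 * m \<le> (K + 1) * m"
    using K_nonneg m_pos by (intro mult_right_mono) auto
  then have "P + i + D < \<sigma> - (P + i + D) + n"
    using P_eq width by linarith
  moreover have "\<sigma> - (P + i + D) \<le> P + m - D + 1"
    using main_interval_nonempty width i_nonneg D_pos by linarith
  ultimately show ?thesis
    using top side_block_bounds by (fastforce simp: exponents_def main_block_def)
qed

lemma side_blocks_disjoint: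
  assumes "a < b"
  shows "side_block a \<inter> side_block b = {}"
proof -
  have "(a + 1) * m \<le> b * m"
    using assms m_pos by (intro mult_right_mono) auto
  then have "P + a * m + D < P + b * m - D + 1"
    using width i_nonneg by (simp add: algebra_simps)
  then show ?thesis
    by (auto simp: side_block_def)
qed

lemma card_exponents: "card exponents = nat (2 * (P + i + D) - \<sigma> + 1) + nat K * nat (2 * D)"
proof -
  have "card (\<Union>e\<in>{1..K}. side_block e) = (\<Sum>e\<in>{1..K}. card (side_block e))"
  proof (rule card_UN_disjoint)
    show "\<forall>a\<in>{1..K}. \<forall>b\<in>{1..K}. a \<noteq> b \<longrightarrow> side_block a \<inter> side_block b = {}"
      using side_blocks_disjoint by (metis Int_commute linorder_less_linear)
  qed (auto simp: side_block_def)
  also have "\<dots> = nat K * nat (2 * D)"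
    using K_nonneg by (simp add: side_block_def)
  finally have card_side: "card (\<Union>e\<in>{1..K}. side_block e) = nat K * nat (2 * D)" .
  have "P + i + D < P + e * m - D + 1" if "1 \<le> e" for e
  proof -
    have "m \<le> e * m"
      using that m_pos by (simp add: mult_le_cancel_right1)
    then show ?thesis
      using width i_nonneg by linarith
  qed
  then have "main_block \<inter> (\<Union>e\<in>{1..K}. side_block e) = {}"
    by (fastforce simp: main_block_def side_block_def)
  then show ?thesis
    unfolding exponents_def using card_side by (simp add: card_Un_disjoint main_block_def side_block_def)
qed

text \<open>The grid for locality starts \<open>\<nu> - K - 1\<close> multiples of \<open>m\<close> below the first side block:
  its first rows lie in the main block, the remaining \<open>K\<close> rows are the side blocks.\<close>

lemma grid_subset_exponents:
  assumes "0 \<le> j" "j < 2 * D" "0 \<le> h" "h < \<nu>"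
  shows "P - D + 1 - (\<nu> - K - 1) * m + j + h * m \<in> exponents"
proof (cases "h \<le> \<nu> - K - 1")
  case True
  have "h * m \<le> (\<nu> - K - 1) * m" "0 \<le> h * m"
    using True assms m_pos by (simp_all add: mult_right_mono)
  moreover have "(\<nu> - K - 1) * m = n - (K + 1) * m"
    using n_eq by (simp add: algebra_simps)
  ultimately have "P - D + 1 - (\<nu> - K - 1) * m + j + h * m \<in> main_block"
    using assms P_eq i_nonneg unfolding main_block_def by auto
  then show ?thesis
    by (simp add: exponents_def)
next
  case False
  then have "P - D + 1 - (\<nu> - K - 1) * m + j + h * m \<in> side_block (h - (\<nu> - K - 1))"
    using assms by (simp add: side_block_def algebra_simps)
  then show ?thesis
    using False assms by (auto simp: exponents_def)
qed

end

context cyclic_code_setting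
begin

lemma optimal_LRC_of_exponent_layout:
  fixes r \<delta> i D m \<nu> :: nat and P K \<sigma> :: int
  assumes "m = r + \<delta> - 1" "n = \<nu> * m" "\<delta> = 2 * D + 1" "\<delta> \<ge> 3" "r \<ge> 1" "2 * i \<le> r - 1"
    and "\<sigma> = 0 \<or> \<sigma> = int n" "K \<ge> 0" "K + 1 < int \<nu>"
    and P_eq: "2 * P = \<sigma> + int n - (K + 1) * int m - 1"
  shows "optimal_LRC_with q n r \<delta>
     (cyc_code q n (setmul (rpow \<alpha> n ` ({\<sigma> - (P + int i) - 1 .. P + int i} \<union> {P + e * int m | e. 1 \<le> e \<and> e \<le> K}))
                          (rpow \<alpha> n ` {- (int D - 1) .. int D})))
     (nat ((K + 1) * int r - 2 * int i)) (nat (2 * (P + int i + int D) - \<sigma> + 2))"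
proof -
  have m_eq: "int m = int r + 2 * int D"
    using assms(1,3) by simp
  have n_eq: "int n = int \<nu> * int m"
    using assms(2) by simp
  have "(K + 2) * int m \<le> int \<nu> * int m"
    using assms(9) by (intro mult_right_mono) auto
  then have room: "(K + 1) * int m + int m \<le> int n"
    using n_eq by (simp add: algebra_simps)
  interpret exponent_layout P "int i" "int D" "int m" K \<sigma> "int n" "int \<nu>"
    using assms m_eq n_eq by unfold_locales auto
  have setmul_eq: "setmul (rpow \<alpha> n ` ({\<sigma> - (P + int i) - 1 .. P + int i} \<union> {P + e * int m | e. 1 \<le> e \<and> e \<le> K}))
      (rpow \<alpha> n ` {- (int D - 1) .. int D}) = rpow \<alpha> n ` exponents"
    using sumset_eq_exponents by (simp add: setmul_rpow_image A_exponents_def B_exponents_def)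
  define d where "d = nat (2 * (P + int i + int D) - \<sigma> + 2)"
  have "2 * P - \<sigma> + 1 \<ge> int m"
    using P_eq room by simp
  then have "0 \<le> 2 * (P + int i + int D) - \<sigma> + 2"
    by simp
  then have d: "int d = int n - (K + 1) * int m + 2 * int i + 2 * int D + 1"
    using P_eq by (simp add: d_def)
  have k_int: "int (nat K * r + (r - 2 * i - 1) + 1) = (K + 1) * int r - 2 * int i"
    using assms(5,6,8) by (simp add: of_nat_diff algebra_simps)
  then have k: "nat ((K + 1) * int r - 2 * int i) = nat K * r + (r - 2 * i - 1) + 1"
    by (metis nat_int)
  show ?thesis
    unfolding setmul_eq d_def[symmetric] k
  proof (rule optimal_LRC_of_defining_set[OF assms(2,1,5), where G = "nat K" and e = "r - 2 * i - 1"])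
    show "\<forall>t\<in>exponents. \<exists>t'\<in>exponents. t' mod int n = (- t) mod int n"
      by (rule exponents_negation_closed)
    show "exponents \<subseteq> {\<sigma> - (P + int i + int D)..<\<sigma> - (P + int i + int D) + int n}"
      by (rule exponents_window)
    show "\<forall>j<d - 1. \<sigma> - (P + int i + int D) + int j \<in> exponents"
      using d P_eq by (auto simp: exponents_def main_block_def)
    show "\<forall>j<\<delta> - 1. \<forall>h<\<nu>. P - int D + 1 - (int \<nu> - K - 1) * int m + int j + int h * int m \<in> exponents"
      using assms(3) grid_subset_exponents by auto
    have "int (card exponents) = int d - 1 + K * (2 * int D)"
      using card_exponents d P_eq assms(8) room by simp
    then have "int (card exponents + (nat K * r + (r - 2 * i - 1) + 1)) = int n"
      using k_int d m_eq by (simp add: algebra_simps)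
    then show "card exponents + (nat K * r + (r - 2 * i - 1) + 1) = n"
      by (simp only: of_nat_eq_iff)
    have "int (nat K * (\<delta> - 1)) = K * (2 * int D)"
      using assms(3,8) by simp
    then have "int (d + nat K * (\<delta> - 1) + (nat K * r + (r - 2 * i - 1) + 1)) = int (n + 1)"
      using k_int d m_eq by (simp add: algebra_simps)
    then show "d + nat K * (\<delta> - 1) + (nat K * r + (r - 2 * i - 1) + 1) = n + 1"
      by (simp only: of_nat_eq_iff)
  qed (use assms in auto)
qed

lemma Collect_rpow_interval: "{rpow \<alpha> n j | j. a \<le> j \<and> j \<le> b} = rpow \<alpha> n ` {a..b}"
  by auto

lemma Collect_rpow_shifted_multiples:
  "{rpow \<alpha> n (c + (l + e) * m) | e. 1 \<le> e \<and> e \<le> K} = rpow \<alpha> n ` {(c + l * m) + e * m | e. 1 \<le> e \<and> e \<le> K}"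
  by (auto simp: algebra_simps)

lemma Collect_rpow_odd_interval:
  assumes "\<delta> = 2 * D + 1"
  shows "{rpow \<alpha> n j | j. - ((int \<delta> - 3) div 2) \<le> j \<and> j \<le> (int \<delta> - 1) div 2} = rpow \<alpha> n ` {- (int D - 1) .. int D}"
proof -
  have "(int \<delta> - 3) div 2 = int D - 1" "(int \<delta> - 1) div 2 = int D"
    using assms by simp_all
  then show ?thesis
    by (simp add: Collect_rpow_interval)
qed

lemma optimal_LRC_centred_at_zero:
  fixes l :: int
  assumes "r \<ge> 1" "\<delta> \<ge> 3" "odd \<delta>" "(r + \<delta> - 1) dvd n" "2 * i \<le> r - 1" "odd (r + \<delta> - 1)"
    and "0 \<le> l" "l \<le> (int (n div (r + \<delta> - 1)) - 3) div 2"
  shows "optimal_LRC_with q n r \<delta> (cyc_code q n (setmul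
      ({rpow \<alpha> n j | j. - ((int r + int \<delta>) div 2) - l * int (r + \<delta> - 1) - int i \<le> j \<and>
          j \<le> (int r + int \<delta> - 2) div 2 + l * int (r + \<delta> - 1) + int i}
       \<union> {rpow \<alpha> n ((int r + int \<delta> - 2) div 2 + (l + e) * int (r + \<delta> - 1)) | e.
          1 \<le> e \<and> e \<le> int (n div (r + \<delta> - 1)) - 2 * l - 2})
      {rpow \<alpha> n j | j. - ((int \<delta> - 3) div 2) \<le> j \<and> j \<le> (int \<delta> - 1) div 2}))
     (nat ((int (n div (r + \<delta> - 1)) - 2 * l - 1) * int r - 2 * int i))
     (nat (int \<delta> + 2 * int i + (2 * l + 1) * int (r + \<delta> - 1)))"
proof -
  define m \<nu> D where "m = r + \<delta> - 1" and "\<nu> = n div m" and "D = (\<delta> - 1) div 2"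
  have \<delta>: "\<delta> = 2 * D + 1"
    using assms(3) by (simp add: D_def)
  have m: "int m = int r + int \<delta> - 1"
    using assms(1) by (simp add: m_def)
  have n_nat: "n = \<nu> * m"
    using assms(4) by (simp add: \<nu>_def m_def)
  then have n: "int n = int \<nu> * int m"
    by simp
  have l: "2 * l \<le> int \<nu> - 3"
    using assms(8) by (simp add: \<nu>_def m_def)
  have "even (r + \<delta>)"
    using assms(1,6) by (cases "r + \<delta>") auto
  then obtain H where H: "int r + int \<delta> = 2 * H"
    by (metis evenE of_nat_add of_nat_mult of_nat_numeral)
  define P K where "P = H - 1 + l * int m" and "K = int \<nu> - 2 * l - 2"
  have "2 * P = 0 + int n - (K + 1) * int m - 1"
    using H m n by (simp add: P_def K_def algebra_simps)
  then have main: "optimal_LRC_with q n r \<delta>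
      (cyc_code q n (setmul (rpow \<alpha> n ` ({0 - (P + int i) - 1 .. P + int i} \<union> {P + e * int m | e. 1 \<le> e \<and> e \<le> K}))
                           (rpow \<alpha> n ` {- (int D - 1) .. int D})))
      (nat ((K + 1) * int r - 2 * int i)) (nat (2 * (P + int i + int D) - 0 + 2))"
    using assms(1,2,5,7) \<delta> l by (intro optimal_LRC_of_exponent_layout[OF m_def n_nat]) (auto simp: K_def)
  have "- ((int r + int \<delta>) div 2) - l * int m - int i = 0 - (P + int i) - 1"
    and "(int r + int \<delta> - 2) div 2 + l * int m + int i = P + int i"
    and "(int r + int \<delta> - 2) div 2 + l * int m = P"
    using H by (simp_all add: P_def)
  then have A: "{rpow \<alpha> n j | j. - ((int r + int \<delta>) div 2) - l * int m - int i \<le> j \<and>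
        j \<le> (int r + int \<delta> - 2) div 2 + l * int m + int i}
      \<union> {rpow \<alpha> n ((int r + int \<delta> - 2) div 2 + (l + e) * int m) | e. 1 \<le> e \<and> e \<le> int \<nu> - 2 * l - 2}
      = rpow \<alpha> n ` ({0 - (P + int i) - 1 .. P + int i} \<union> {P + e * int m | e. 1 \<le> e \<and> e \<le> K})"
    by (simp only: Collect_rpow_interval Collect_rpow_shifted_multiples image_Un K_def)
  have k: "(K + 1) * int r - 2 * int i = (int \<nu> - 2 * l - 1) * int r - 2 * int i"
    by (simp add: K_def)
  have d: "2 * (P + int i + int D) - 0 + 2 = int \<delta> + 2 * int i + (2 * l + 1) * int m"
    using H m \<delta> by (simp add: P_def algebra_simps)
  show ?thesis
    using main unfolding m_def[symmetric] \<nu>_def[symmetric] Collect_rpow_odd_interval[OF \<delta>] A k d .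
qed

lemma optimal_LRC_centred_at_half_length:
  fixes l :: int
  assumes "r \<ge> 1" "\<delta> \<ge> 3" "odd \<delta>" "(r + \<delta> - 1) dvd n" "2 * i \<le> r - 1"
    and "odd (r + \<delta> - 1)" "odd (int (n div (r + \<delta> - 1)))"
    and "1 \<le> l" "l \<le> (int (n div (r + \<delta> - 1)) - 3) div 2"
  shows "optimal_LRC_with q n r \<delta> (cyc_code q n (setmul
      ({rpow \<alpha> n j | j. (int n - 1) div 2 - l * int (r + \<delta> - 1) - int i \<le> j \<and>
          j \<le> (int n - 1) div 2 + l * int (r + \<delta> - 1) + int i}
       \<union> {rpow \<alpha> n ((int n - 1) div 2 + (l + e) * int (r + \<delta> - 1)) | e.
          1 \<le> e \<and> e \<le> int (n div (r + \<delta> - 1)) - 2 * l - 1})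
      {rpow \<alpha> n j | j. - ((int \<delta> - 3) div 2) \<le> j \<and> j \<le> (int \<delta> - 1) div 2}))
     (nat ((int (n div (r + \<delta> - 1)) - 2 * l) * int r - 2 * int i))
     (nat (int \<delta> + 2 * int i + 2 * l * int (r + \<delta> - 1)))"
proof -
  define m \<nu> D where "m = r + \<delta> - 1" and "\<nu> = n div m" and "D = (\<delta> - 1) div 2"
  have \<delta>: "\<delta> = 2 * D + 1"
    using assms(3) by (simp add: D_def)
  have n_nat: "n = \<nu> * m"
    using assms(4) by (simp add: \<nu>_def m_def)
  then have n: "int n = int \<nu> * int m"
    by simp
  have l: "2 * l \<le> int \<nu> - 3"
    using assms(9) by (simp add: \<nu>_def m_def)
  have "odd (int n)"
    using assms(6,7) n by (simp add: \<nu>_def m_def)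
  then have c: "2 * ((int n - 1) div 2) = int n - 1"
    by simp
  define P K where "P = (int n - 1) div 2 + l * int m" and "K = int \<nu> - 2 * l - 1"
  have "2 * P = int n + int n - (K + 1) * int m - 1"
    using c n by (simp add: P_def K_def algebra_simps)
  then have main: "optimal_LRC_with q n r \<delta>
      (cyc_code q n (setmul (rpow \<alpha> n ` ({int n - (P + int i) - 1 .. P + int i} \<union> {P + e * int m | e. 1 \<le> e \<and> e \<le> K}))
                           (rpow \<alpha> n ` {- (int D - 1) .. int D})))
      (nat ((K + 1) * int r - 2 * int i)) (nat (2 * (P + int i + int D) - int n + 2))"
    using assms(1,2,5,8) \<delta> l by (intro optimal_LRC_of_exponent_layout[OF m_def n_nat]) (auto simp: K_def)
  have "(int n - 1) div 2 - l * int m - int i = int n - (P + int i) - 1"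
    and "(int n - 1) div 2 + l * int m + int i = P + int i"
    and "(int n - 1) div 2 + l * int m = P"
    using c by (simp_all add: P_def)
  then have A: "{rpow \<alpha> n j | j. (int n - 1) div 2 - l * int m - int i \<le> j \<and>
        j \<le> (int n - 1) div 2 + l * int m + int i}
      \<union> {rpow \<alpha> n ((int n - 1) div 2 + (l + e) * int m) | e. 1 \<le> e \<and> e \<le> int \<nu> - 2 * l - 1}
      = rpow \<alpha> n ` ({int n - (P + int i) - 1 .. P + int i} \<union> {P + e * int m | e. 1 \<le> e \<and> e \<le> K})"
    by (simp only: Collect_rpow_interval Collect_rpow_shifted_multiples image_Un K_def)
  have k: "(K + 1) * int r - 2 * int i = (int \<nu> - 2 * l) * int r - 2 * int i"
    by (simp add: K_def)
  have d: "2 * (P + int i + int D) - int n + 2 = int \<delta> + 2 * int i + 2 * l * int m"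
    using c \<delta> by (simp add: P_def algebra_simps)
  show ?thesis
    using main unfolding m_def[symmetric] \<nu>_def[symmetric] Collect_rpow_odd_interval[OF \<delta>] A k d .
qed

end

theorem corollary5p5:
  fixes q n r \<delta> i :: nat and \<alpha> :: "'a::{field,finite}"
  assumes "\<exists>p m. prime p \<and> m > 0 \<and> q = p ^ m"
    and "card (UNIV :: 'a set) = q ^ 2"
    and "n dvd q + 1"
    and "\<alpha> ^ n = 1" and "\<forall>k. 0 < k \<and> k < n \<longrightarrow> \<alpha> ^ k \<noteq> 1"
    and "r \<ge> 1" and "\<delta> \<ge> 3" and "odd \<delta>"
    and "(r + \<delta> - 1) dvd n"
    and "2 * i \<le> r - 1"
  shows
   "(let \<nu> = int (n div (r + \<delta> - 1)); m = int (r + \<delta> - 1); ii = int i; rr = int r; dd = int \<delta>;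
         B = {rpow \<alpha> n j | j. - ((dd - 3) div 2) \<le> j \<and> j \<le> (dd - 1) div 2}
     in (odd (r + \<delta> - 1) \<longrightarrow>
          (\<forall>l::int. 0 \<le> l \<and> l \<le> (\<nu> - 3) div 2 \<longrightarrow>
             (let A = {rpow \<alpha> n j | j. - ((rr + dd) div 2) - l * m - ii \<le> j \<and>
                                        j \<le> (rr + dd - 2) div 2 + l * m + ii}
                    \<union> {rpow \<alpha> n ((rr + dd - 2) div 2 + (l + e) * m) | e. 1 \<le> e \<and> e \<le> \<nu> - 2 * l - 2}
              in optimal_LRC_with q n r \<delta> (cyc_code q n (setmul A B))
                   (nat ((\<nu> - 2 * l - 1) * rr - 2 * ii))
                   (nat (dd + 2 * ii + (2 * l + 1) * m)))))
      \<and> (odd (r + \<delta> - 1) \<and> odd \<nu> \<longrightarrow>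
          (\<forall>l::int. 1 \<le> l \<and> l \<le> (\<nu> - 3) div 2 \<longrightarrow>
             (let A = {rpow \<alpha> n j | j. (int n - 1) div 2 - l * m - ii \<le> j \<and>
                                        j \<le> (int n - 1) div 2 + l * m + ii}
                    \<union> {rpow \<alpha> n ((int n - 1) div 2 + (l + e) * m) | e. 1 \<le> e \<and> e \<le> \<nu> - 2 * l - 1}
              in optimal_LRC_with q n r \<delta> (cyc_code q n (setmul A B))
                   (nat ((\<nu> - 2 * l) * rr - 2 * ii))
                   (nat (dd + 2 * ii + 2 * l * m))))))"
proof -
  interpret cyclic_code_setting q "TYPE('a)" n \<alpha>
    by unfold_locales (use assms in auto)
  show ?thesis
    unfolding Let_def
    using optimal_LRC_centred_at_zero[OF assms(6-10)] optimal_LRC_centred_at_half_length[OF assms(6-10)]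
    by blast
qed

end
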